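(* For $0<\varepsilon\le 1/2$, let $G(\varepsilon;\eta)=-\dfrac{\varepsilon\Upsilon(\varepsilon^{1/2}\eta)}{1-\varepsilon\eta}$ for $\eta\ge0$ and let $W(\varepsilon;\eta)$ be defined by $G=-\partial_\eta W$, $W(\varepsilon;0)=0$. Then, with a constant $C$ independent of $\varepsilon$: (1) $W(\varepsilon;\cdot)$ is increasing and $0\le W(\varepsilon;\eta)\le1$ for all $\eta>0$; (2) $\lim_{\varepsilon\to0}W(\varepsilon;\infty)=0$; (3) $\int_0^\infty\big(e^{-W(\varepsilon;\eta)}-e^{-W(\varepsilon;\infty)}\big)^2\,d\eta\le C$; (4) $\int_0^\infty G^2(\varepsilon;\eta)\,d\eta\le C$; (5) $\int_0^\infty\int_\eta^\infty G^2(\varepsilon;y)\,dy\,d\eta\le C$.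
   Context: $\Upsilon\in C^\infty([0,\infty))$ is a cut-off function with $0\le\Upsilon\le1$, $\Upsilon(z)=1$ for $0\le z\le1/2$ and $\Upsilon(z)=0$ for $z\ge3/4$. $W(\varepsilon;\infty)=\lim_{\eta\to\infty}W(\varepsilon;\eta)$. *)

theory Defs
  imports "HOL-Analysis.Analysis"
begin

text \<open>C-infinity on a set S (one-sided derivatives at boundary points): there is a
  sequence of functions D with D 0 = f on S and D k having derivative D (k+1) within S.\<close>
definition smooth_within :: "real set \<Rightarrow> (real \<Rightarrow> real) \<Rightarrow> bool" where
  "smooth_within S f \<longleftrightarrow> (\<exists>D :: nat \<Rightarrow> real \<Rightarrow> real.
     (\<forall>x\<in>S. D 0 x = f x) \<and>
     (\<forall>k. \<forall>x\<in>S. (D k has_real_derivative D (Suc k) x) (at x within S)))"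

definition cutoff :: "(real \<Rightarrow> real) \<Rightarrow> bool" where
  "cutoff U \<longleftrightarrow> smooth_within {0..} U \<and>
     (\<forall>z\<ge>0. 0 \<le> U z \<and> U z \<le> 1) \<and>
     (\<forall>z. 0 \<le> z \<and> z \<le> 1/2 \<longrightarrow> U z = 1) \<and>
     (\<forall>z\<ge>3/4. U z = 0)"

definition Gfun :: "(real \<Rightarrow> real) \<Rightarrow> real \<Rightarrow> real \<Rightarrow> real" where
  "Gfun U \<epsilon> \<eta> = - (\<epsilon> * U (sqrt \<epsilon> * \<eta>)) / (1 - \<epsilon> * \<eta>)"

definition Winf :: "(real \<Rightarrow> real \<Rightarrow> real) \<Rightarrow> real \<Rightarrow> real" where
  "Winf W \<epsilon> = Lim at_top (W \<epsilon>)"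

end

theory Submission
  imports Defs
begin

text \<open>Because \<open>U\<close> vanishes from \<open>3/4\<close> on, \<open>G(\<epsilon>; \<cdot>)\<close> is supported in \<open>[0, R]\<close>,
  \<open>R = 3 / (4 \<surd>\<epsilon>)\<close>, and \<open>\<epsilon> R = 3\<surd>\<epsilon>/4 \<le> 3/5\<close> keeps the denominator \<open>1 - \<epsilon> \<eta>\<close> above \<open>2/5\<close>
  there. So \<open>0 \<le> -G \<le> \<epsilon> / (1 - \<epsilon> \<eta>) \<le> 5\<epsilon>/2\<close>: \<open>W\<close> increases, is constant from \<open>R\<close> on, and
  \<open>W(\<epsilon>; \<infinity>) = W(\<epsilon>; R) \<le> - ln (1 - \<epsilon> R)\<close>, which is at most \<open>1\<close> and at most \<open>2\<surd>\<epsilon>\<close>.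
  Each of the three integrands is bounded and vanishes beyond \<open>R\<close>, and bound times length is
  at most \<open>3\<surd>\<epsilon>\<close>, \<open>25\<epsilon>\<^sup>2R/4\<close> and \<open>25(\<epsilon>R)\<^sup>2/4\<close> respectively, all below \<open>3\<close>.\<close>

lemma has_real_derivative_nonneg_imp_le:
  fixes f f' :: "real \<Rightarrow> real"
  assumes "a \<le> b"
    and deriv: "\<And>x. a \<le> x \<Longrightarrow> x \<le> b \<Longrightarrow> (f has_real_derivative f' x) (at x within {a..b})"
    and nonneg: "\<And>x. a < x \<Longrightarrow> x < b \<Longrightarrow> 0 \<le> f' x"
  shows "f a \<le> f b"
proof (rule DERIV_nonneg_imp_increasing_open[OF \<open>a \<le> b\<close>])
  fix x assume x: "a < x" "x < b"
  have "(f has_real_derivative f' x) (at x within {a<..<b})"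
    using deriv[of x] x by (auto intro: DERIV_subset)
  then have "(f has_real_derivative f' x) (at x)"
    using at_within_open[of x "{a<..<b}"] x by simp
  then show "\<exists>y. (f has_real_derivative y) (at x) \<and> 0 \<le> y" using nonneg x by blast
next
  show "continuous_on {a..b} f"
    unfolding continuous_on_eq_continuous_within using deriv DERIV_continuous by fastforce
qed

lemma has_integral_atLeast_if_vanishes_beyond:
  fixes f :: "real \<Rightarrow> real"
  assumes "b \<le> a" "f integrable_on {b..a}" "\<And>x. a \<le> x \<Longrightarrow> f x = 0"
  shows "(f has_integral integral {b..a} f) {b..}"
proof -
  have "(f has_integral integral {b..a} f + 0) ({b..a} \<union> {a..})"
    using assms by (intro has_integral_Un has_integral_is_0) auto
  moreover have "{b..a} \<union> {a..} = {b..}" using assms(1) by auto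
  ultimately show ?thesis by simp
qed

lemma integral_le_length_times_bound:
  fixes f :: "real \<Rightarrow> real"
  assumes "a \<le> b" "f integrable_on {a..b}" "\<And>x. a \<le> x \<Longrightarrow> x \<le> b \<Longrightarrow> f x \<le> c"
  shows "integral {a..b} f \<le> (b - a) * c"
proof -
  have "integral {a..b} f \<le> integral {a..b} (\<lambda>_. c)"
    using assms by (intro integral_le) auto
  then show ?thesis using assms(1) by simp
qed

lemma smooth_within_imp_continuous_on:
  assumes "smooth_within S f"
  shows "continuous_on S f"
proof -
  obtain D where D: "\<forall>x\<in>S. D 0 x = f x"
    "\<forall>k. \<forall>x\<in>S. (D k has_real_derivative D (Suc k) x) (at x within S)"
    using assms unfolding smooth_within_def by blast
  have "continuous_on S (D 0)"
    unfolding continuous_on_eq_continuous_within using D(2) DERIV_continuous by blast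
  then show ?thesis using D(1) continuous_on_eq by blast
qed

lemma exp_minus_diff_le:
  fixes u v :: real
  assumes "0 \<le> u" "u \<le> v"
  shows "exp (- u) - exp (- v) \<le> v - u"
proof -
  have "exp (- u) - exp (- v) = exp (- u) * (1 - exp (- (v - u)))"
    by (simp add: algebra_simps flip: exp_add)
  also have "\<dots> \<le> 1 * (v - u)"
    using assms exp_ge_add_one_self[of "u - v"] by (intro mult_mono) (auto simp: algebra_simps)
  finally show ?thesis by simp
qed

lemma minus_ln_one_minus_le_1:
  fixes x :: real assumes "x \<le> 3/5" shows "- ln (1 - x) \<le> 1"
proof -
  have "exp (-1 :: real) \<le> 2/5"
    using exp_lower_Taylor_quadratic[of 1] by (simp add: exp_minus field_simps)
  then have "exp (-1) \<le> 1 - x" using \<open>x \<le> 3/5\<close> by simp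
  then have "-1 \<le> ln (1 - x)" using \<open>x \<le> 3/5\<close> by (subst ln_ge_iff) auto
  then show ?thesis by simp
qed

lemma minus_ln_one_minus_le:
  fixes x :: real assumes "0 \<le> x" "x \<le> 3/5" shows "- ln (1 - x) \<le> 5/2 * x"
proof -
  have "- ln (1 - x) = ln (1 / (1 - x))" using assms by (simp add: ln_div)
  also have "\<dots> \<le> 1 / (1 - x) - 1" using \<open>x \<le> 3/5\<close> by (intro ln_le_minus_one) simp
  also have "\<dots> = x / (1 - x)" using \<open>x \<le> 3/5\<close> by (simp add: field_simps)
  also have "\<dots> \<le> x / (2/5)" using \<open>0 \<le> x\<close> \<open>x \<le> 3/5\<close> by (intro divide_left_mono) auto
  finally show ?thesis by simp
qed

locale scaled_cutoff =
  fixes U :: "real \<Rightarrow> real" and e :: real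
  assumes cutoff: "cutoff U" and e_pos: "0 < e" and e_le: "e \<le> 1/2"
begin

definition radius :: real where "radius = 3 / (4 * sqrt e)"

lemma sqrt_e_le: "sqrt e \<le> 4/5"
proof -
  have "sqrt e \<le> sqrt ((4/5)\<^sup>2)" using e_le by (intro real_sqrt_le_mono) (simp add: power2_eq_square)
  then show ?thesis by simp
qed

lemma radius_pos: "0 < radius"
  using e_pos by (simp add: radius_def)

lemma sqrt_e_radius: "sqrt e * radius = 3/4"
  using e_pos by (simp add: radius_def)

lemma e_radius: "e * radius = 3/4 * sqrt e"
proof -
  have "e = sqrt e * sqrt e" using e_pos by simp
  then show ?thesis using sqrt_e_radius by (metis mult.assoc mult.commute)
qed

lemma e_radius_nonneg: "0 \<le> e * radius"
  using e_pos radius_pos by simp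

lemma e_radius_le: "e * radius \<le> 3/5"
  using e_radius sqrt_e_le by simp

lemma Gfun_eq_0:
  assumes "radius \<le> y" shows "Gfun U e y = 0"
proof -
  have "sqrt e * radius \<le> sqrt e * y"
    using assms e_pos by (intro mult_left_mono) auto
  then have "3/4 \<le> sqrt e * y" using sqrt_e_radius by simp
  then show ?thesis using cutoff unfolding cutoff_def Gfun_def by simp
qed

lemma denominator_ge: "0 \<le> y \<Longrightarrow> y \<le> radius \<Longrightarrow> 2/5 \<le> 1 - e * y"
  using e_radius_le mult_left_mono[of y radius e] e_pos by linarith

lemma cutoff_at_scaled: "0 \<le> y \<Longrightarrow> 0 \<le> U (sqrt e * y) \<and> U (sqrt e * y) \<le> 1"
  using cutoff e_pos unfolding cutoff_def by simp

lemma Gfun_nonpos: "0 \<le> y \<Longrightarrow> Gfun U e y \<le> 0"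
  using Gfun_eq_0[of y] denominator_ge[of y] cutoff_at_scaled[of y] e_pos
  by (cases "y \<le> radius") (auto simp: Gfun_def)

lemma minus_Gfun_le: "0 \<le> y \<Longrightarrow> y \<le> radius \<Longrightarrow> - Gfun U e y \<le> e / (1 - e * y)"
  using denominator_ge[of y] cutoff_at_scaled[of y] e_pos
  by (auto simp: Gfun_def intro: divide_right_mono)

lemma Gfun_sq_le:
  assumes "0 \<le> y" shows "(Gfun U e y)\<^sup>2 \<le> (5/2 * e)\<^sup>2"
proof (cases "y \<le> radius")
  case True
  have "e / (1 - e * y) \<le> e / (2/5)"
    using denominator_ge[OF \<open>0 \<le> y\<close> True] e_pos by (intro divide_left_mono) auto
  then have "- Gfun U e y \<le> 5/2 * e"
    using minus_Gfun_le[OF \<open>0 \<le> y\<close> True] by argo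
  then have "\<bar>Gfun U e y\<bar> \<le> 5/2 * e"
    using Gfun_nonpos[OF \<open>0 \<le> y\<close>] by simp
  then have "\<bar>Gfun U e y\<bar>\<^sup>2 \<le> (5/2 * e)\<^sup>2" by (rule power_mono) simp
  then show ?thesis by simp
qed (simp add: Gfun_eq_0)

lemma continuous_on_Gfun: "continuous_on {0..radius} (Gfun U e)"
proof -
  have "continuous_on {0..radius} (\<lambda>y. U (sqrt e * y))"
    by (rule continuous_on_compose2[OF smooth_within_imp_continuous_on])
      (use cutoff e_pos in \<open>auto simp: cutoff_def intro!: continuous_intros\<close>)
  then show ?thesis
    unfolding Gfun_def using denominator_ge by (intro continuous_intros) force+
qed

lemma Gfun_sq_integrable_interval: "0 \<le> b \<Longrightarrow> (\<lambda>y. (Gfun U e y)\<^sup>2) integrable_on {b..radius}"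
  by (rule integrable_continuous_interval, rule continuous_on_subset[of "{0..radius}"])
    (auto intro!: continuous_intros continuous_on_Gfun)

lemma has_integral_Gfun_sq:
  "0 \<le> b \<Longrightarrow> b \<le> radius \<Longrightarrow>
    ((\<lambda>y. (Gfun U e y)\<^sup>2) has_integral integral {b..radius} (\<lambda>y. (Gfun U e y)\<^sup>2)) {b..}"
  by (rule has_integral_atLeast_if_vanishes_beyond)
    (auto simp: Gfun_eq_0 Gfun_sq_integrable_interval)

lemma Gfun_sq_integrable: "0 \<le> b \<Longrightarrow> (\<lambda>y. (Gfun U e y)\<^sup>2) integrable_on {b..}"
  using has_integral_Gfun_sq[of b] has_integral_is_0[of "{b..}" "\<lambda>y. (Gfun U e y)\<^sup>2"]
  by (cases "b \<le> radius") (auto simp: Gfun_eq_0)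

lemma integral_Gfun_sq_le: "integral {0..} (\<lambda>y. (Gfun U e y)\<^sup>2) \<le> 3"
proof -
  have "integral {0..} (\<lambda>y. (Gfun U e y)\<^sup>2) = integral {0..radius} (\<lambda>y. (Gfun U e y)\<^sup>2)"
    using has_integral_Gfun_sq[of 0] radius_pos by (simp add: integral_unique)
  also have "\<dots> \<le> (radius - 0) * (5/2 * e)\<^sup>2"
    using radius_pos Gfun_sq_integrable_interval Gfun_sq_le
    by (intro integral_le_length_times_bound) auto
  also have "\<dots> = 25/4 * e * (e * radius)"
    by (simp add: power2_eq_square)
  also have "\<dots> \<le> 25/4 * (1/2) * (3/5)"
    using e_pos e_le e_radius_le radius_pos by (intro mult_mono) auto
  finally show ?thesis by simp
qed

lemma integral_Gfun_sq_tail: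
  "0 \<le> \<eta> \<Longrightarrow> integral {\<eta>..} (\<lambda>y. (Gfun U e y)\<^sup>2) =
     (if \<eta> \<le> radius then integral {\<eta>..radius} (\<lambda>y. (Gfun U e y)\<^sup>2) else 0)"
  using has_integral_Gfun_sq[of \<eta>] has_integral_is_0[of "{\<eta>..}" "\<lambda>y. (Gfun U e y)\<^sup>2"]
  by (auto simp: Gfun_eq_0 integral_unique)

lemma integral_Gfun_sq_tail_le:
  assumes "0 \<le> \<eta>" shows "integral {\<eta>..} (\<lambda>y. (Gfun U e y)\<^sup>2) \<le> radius * (5/2 * e)\<^sup>2"
proof (cases "\<eta> \<le> radius")
  case True
  have "integral {\<eta>..radius} (\<lambda>y. (Gfun U e y)\<^sup>2) \<le> (radius - \<eta>) * (5/2 * e)\<^sup>2"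
    using True assms Gfun_sq_integrable_interval Gfun_sq_le
    by (intro integral_le_length_times_bound) auto
  also have "\<dots> \<le> radius * (5/2 * e)\<^sup>2"
    using assms by (intro mult_right_mono) auto
  finally show ?thesis using integral_Gfun_sq_tail[OF assms] True by simp
qed (use integral_Gfun_sq_tail[OF assms] radius_pos in simp)

lemma has_integral_Gfun_sq_tail:
  "((\<lambda>\<eta>. integral {\<eta>..} (\<lambda>y. (Gfun U e y)\<^sup>2)) has_integral
     integral {0..radius} (\<lambda>\<eta>. integral {\<eta>..} (\<lambda>y. (Gfun U e y)\<^sup>2))) {0..}"
proof (rule has_integral_atLeast_if_vanishes_beyond)
  have "continuous_on {0..radius} (\<lambda>\<eta>. integral {\<eta>..radius} (\<lambda>y. (Gfun U e y)\<^sup>2))"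
    using Gfun_sq_integrable_interval radius_pos by (intro indefinite_integral_continuous_1') auto
  then have "(\<lambda>\<eta>. integral {\<eta>..radius} (\<lambda>y. (Gfun U e y)\<^sup>2)) integrable_on {0..radius}"
    by (rule integrable_continuous_interval)
  then show "(\<lambda>\<eta>. integral {\<eta>..} (\<lambda>y. (Gfun U e y)\<^sup>2)) integrable_on {0..radius}"
    by (rule integrable_eq) (simp add: integral_Gfun_sq_tail)
qed (use radius_pos integral_Gfun_sq_tail in auto)

lemma integral_Gfun_sq_tail_integral_le:
  "integral {0..} (\<lambda>\<eta>. integral {\<eta>..} (\<lambda>y. (Gfun U e y)\<^sup>2)) \<le> 3"
proof -
  have "integral {0..} (\<lambda>\<eta>. integral {\<eta>..} (\<lambda>y. (Gfun U e y)\<^sup>2))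
      \<le> (radius - 0) * (radius * (5/2 * e)\<^sup>2)"
    unfolding integral_unique[OF has_integral_Gfun_sq_tail]
    using radius_pos has_integral_Gfun_sq_tail integral_Gfun_sq_tail_le
    by (intro integral_le_length_times_bound) (auto intro: has_integral_integrable integrable_on_subinterval)
  also have "\<dots> = 25/4 * (e * radius)\<^sup>2"
    by (simp add: power2_eq_square)
  also have "\<dots> \<le> 25/4 * (3/5)\<^sup>2"
    using e_pos radius_pos e_radius_le by (intro mult_left_mono power_mono) auto
  finally show ?thesis by (simp add: power2_eq_square)
qed

end

locale Gfun_primitive = scaled_cutoff +
  fixes w :: "real \<Rightarrow> real"
  assumes w_0: "w 0 = 0"
    and has_derivative_w: "\<And>\<eta>. 0 \<le> \<eta> \<Longrightarrow> (w has_real_derivative - Gfun U e \<eta>) (at \<eta> within {0..})"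
begin

lemma has_derivative_w_interval:
  "0 \<le> x \<Longrightarrow> x \<le> t \<Longrightarrow> t \<le> y \<Longrightarrow> (w has_real_derivative - Gfun U e t) (at t within {x..y})"
  using has_derivative_w[of t] by (auto intro: DERIV_subset)

lemma w_mono: "0 \<le> x \<Longrightarrow> x \<le> y \<Longrightarrow> w x \<le> w y"
  by (rule has_real_derivative_nonneg_imp_le[where f' = "\<lambda>t. - Gfun U e t"])
    (use has_derivative_w_interval Gfun_nonpos in auto)

lemma mono_on_w: "mono_on {0..} w"
  by (rule mono_onI) (simp add: w_mono)

lemma w_nonneg: "0 \<le> \<eta> \<Longrightarrow> 0 \<le> w \<eta>"
  using w_mono[of 0 \<eta>] w_0 by simp

lemma w_eq_w_radius:
  assumes "radius \<le> y" shows "w y = w radius"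
proof -
  have "- w radius \<le> - w y"
  proof (rule has_real_derivative_nonneg_imp_le[where f = "\<lambda>t. - w t" and f' = "\<lambda>t. Gfun U e t"])
    show "((\<lambda>t. - w t) has_real_derivative Gfun U e t) (at t within {radius..y})"
      if "radius \<le> t" "t \<le> y" for t
      using DERIV_minus[OF has_derivative_w_interval[of radius t y]] radius_pos that by simp
  qed (use \<open>radius \<le> y\<close> Gfun_eq_0 in auto)
  then show ?thesis using w_mono[of radius y] radius_pos \<open>radius \<le> y\<close> by simp
qed

text \<open>Since \<open>U \<le> 1\<close>, \<open>w\<close> is dominated by the primitive \<open>- ln (1 - e * \<eta>)\<close> of \<open>e / (1 - e * \<eta>)\<close>.\<close>
lemma w_radius_le_minus_ln: "w radius \<le> - ln (1 - e * radius)"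
proof -
  have "- ln (1 - e * 0) - w 0 \<le> - ln (1 - e * radius) - w radius"
  proof (rule has_real_derivative_nonneg_imp_le[where f = "\<lambda>x. - ln (1 - e * x) - w x"
        and f' = "\<lambda>x. e / (1 - e * x) - (- Gfun U e x)"])
    fix x assume x: "0 \<le> x" "x \<le> radius"
    then have "0 < 1 - e * x" using denominator_ge by fastforce
    with has_derivative_w_interval[of 0 x radius] x
    show "((\<lambda>x. - ln (1 - e * x) - w x) has_real_derivative e / (1 - e * x) - (- Gfun U e x))
        (at x within {0..radius})"
      by (auto intro!: derivative_eq_intros)
  next
    fix x assume "0 < x" "x < radius"
    then show "0 \<le> e / (1 - e * x) - (- Gfun U e x)" using minus_Gfun_le[of x] by simp
  qed (use radius_pos in simp)
  then show ?thesis using w_0 by simp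
qed

lemma w_le_1:
  assumes "0 \<le> \<eta>" shows "w \<eta> \<le> 1"
proof -
  have "w radius \<le> 1"
    using w_radius_le_minus_ln minus_ln_one_minus_le_1[OF e_radius_le] by linarith
  then show ?thesis
    using w_mono[OF assms, of radius] w_eq_w_radius[of \<eta>] by (cases "\<eta> \<le> radius") auto
qed

lemma w_radius_le_sqrt: "w radius \<le> 2 * sqrt e"
proof -
  have "w radius \<le> 5/2 * (e * radius)"
    using w_radius_le_minus_ln minus_ln_one_minus_le[OF e_radius_nonneg e_radius_le] by linarith
  then show ?thesis using e_radius real_sqrt_ge_zero[OF less_imp_le[OF e_pos]] by linarith
qed

lemma w_tendsto: "(w \<longlongrightarrow> w radius) at_top"
  unfolding tendsto_def by (metis eventually_at_top_linorder w_eq_w_radius)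

lemma Lim_w: "Lim at_top w = w radius"
  using w_tendsto by (rule tendsto_Lim[rotated]) simp

lemma exp_gap_sq_le:
  assumes "0 \<le> \<eta>" shows "(exp (- w \<eta>) - exp (- w radius))\<^sup>2 \<le> 4 * e"
proof (cases "\<eta> \<le> radius")
  case True
  have "0 \<le> exp (- w \<eta>) - exp (- w radius)"
    using w_mono[OF \<open>0 \<le> \<eta>\<close> True] by simp
  moreover have "exp (- w \<eta>) - exp (- w radius) \<le> 2 * sqrt e"
    using exp_minus_diff_le[OF w_nonneg[OF \<open>0 \<le> \<eta>\<close>] w_mono[OF \<open>0 \<le> \<eta>\<close> True]]
      w_nonneg[OF \<open>0 \<le> \<eta>\<close>] w_radius_le_sqrt by linarith
  ultimately have "(exp (- w \<eta>) - exp (- w radius))\<^sup>2 \<le> (2 * sqrt e)\<^sup>2"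
    by (intro power_mono)
  then show ?thesis using e_pos by (simp add: power_mult_distrib)
next
  case False
  then show ?thesis using w_eq_w_radius[of \<eta>] e_pos by simp
qed

lemma has_integral_exp_gap_sq:
  "((\<lambda>\<eta>. (exp (- w \<eta>) - exp (- w radius))\<^sup>2) has_integral
     integral {0..radius} (\<lambda>\<eta>. (exp (- w \<eta>) - exp (- w radius))\<^sup>2)) {0..}"
proof (rule has_integral_atLeast_if_vanishes_beyond)
  have "continuous_on {0..radius} w"
    unfolding continuous_on_eq_continuous_within
    using has_derivative_w_interval[of 0 _ radius] DERIV_continuous by fastforce
  then show "(\<lambda>\<eta>. (exp (- w \<eta>) - exp (- w radius))\<^sup>2) integrable_on {0..radius}"
    by (intro integrable_continuous_interval continuous_intros)
next
  fix x assume "radius \<le> x"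
  then show "(exp (- w x) - exp (- w radius))\<^sup>2 = 0" using w_eq_w_radius[of x] by simp
qed (use radius_pos in simp)

lemma integral_exp_gap_sq_le: "integral {0..} (\<lambda>\<eta>. (exp (- w \<eta>) - exp (- w radius))\<^sup>2) \<le> 3"
proof -
  have "integral {0..} (\<lambda>\<eta>. (exp (- w \<eta>) - exp (- w radius))\<^sup>2) \<le> (radius - 0) * (4 * e)"
    unfolding integral_unique[OF has_integral_exp_gap_sq]
    using radius_pos exp_gap_sq_le has_integral_exp_gap_sq
    by (intro integral_le_length_times_bound) (auto intro: has_integral_integrable integrable_on_subinterval)
  also have "\<dots> = 3 * sqrt e" using e_radius by (simp add: algebra_simps)
  also have "\<dots> \<le> 3" using e_le by (simp add: real_sqrt_le_1_iff)
  finally show ?thesis .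
qed

end

theorem lemma4p1:
  fixes U :: "real \<Rightarrow> real" and W :: "real \<Rightarrow> real \<Rightarrow> real"
  assumes U: "cutoff U"
    and W0: "\<And>\<epsilon>. 0 < \<epsilon> \<Longrightarrow> \<epsilon> \<le> 1/2 \<Longrightarrow> W \<epsilon> 0 = 0"
    and Wderiv: "\<And>\<epsilon> \<eta>. 0 < \<epsilon> \<Longrightarrow> \<epsilon> \<le> 1/2 \<Longrightarrow> 0 \<le> \<eta> \<Longrightarrow>
        (W \<epsilon> has_real_derivative - Gfun U \<epsilon> \<eta>) (at \<eta> within {0..})"
  shows
    "(\<forall>\<epsilon>. 0 < \<epsilon> \<and> \<epsilon> \<le> 1/2 \<longrightarrow>
        mono_on {0..} (W \<epsilon>) \<and> (\<forall>\<eta>>0. 0 \<le> W \<epsilon> \<eta> \<and> W \<epsilon> \<eta> \<le> 1) \<and>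
        (W \<epsilon> \<longlongrightarrow> Winf W \<epsilon>) at_top)
   \<and> (Winf W \<longlongrightarrow> 0) (at_right 0)
   \<and> (\<exists>C. \<forall>\<epsilon>. 0 < \<epsilon> \<and> \<epsilon> \<le> 1/2 \<longrightarrow>
        (\<lambda>\<eta>. (exp (- W \<epsilon> \<eta>) - exp (- Winf W \<epsilon>))\<^sup>2) integrable_on {0..} \<and>
        integral {0..} (\<lambda>\<eta>. (exp (- W \<epsilon> \<eta>) - exp (- Winf W \<epsilon>))\<^sup>2) \<le> C \<and>
        (\<lambda>\<eta>. (Gfun U \<epsilon> \<eta>)\<^sup>2) integrable_on {0..} \<and>
        integral {0..} (\<lambda>\<eta>. (Gfun U \<epsilon> \<eta>)\<^sup>2) \<le> C \<and>
        (\<forall>\<eta>\<ge>0. (\<lambda>y. (Gfun U \<epsilon> y)\<^sup>2) integrable_on {\<eta>..}) \<and>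
        (\<lambda>\<eta>. integral {\<eta>..} (\<lambda>y. (Gfun U \<epsilon> y)\<^sup>2)) integrable_on {0..} \<and>
        integral {0..} (\<lambda>\<eta>. integral {\<eta>..} (\<lambda>y. (Gfun U \<epsilon> y)\<^sup>2)) \<le> C)"
proof -
  have scaled: "scaled_cutoff U \<epsilon>" if "0 < \<epsilon>" "\<epsilon> \<le> 1/2" for \<epsilon>
    using U that by unfold_locales
  have profile: "Gfun_primitive U \<epsilon> (W \<epsilon>)" if "0 < \<epsilon>" "\<epsilon> \<le> 1/2" for \<epsilon>
    using U that W0 Wderiv by unfold_locales auto
  have Winf_eq: "Winf W \<epsilon> = W \<epsilon> (scaled_cutoff.radius \<epsilon>)" if "0 < \<epsilon>" "\<epsilon> \<le> 1/2" for \<epsilon>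
    unfolding Winf_def using Gfun_primitive.Lim_w[OF profile[OF that]] .
  have "\<forall>\<^sub>F \<epsilon> in at_right 0. 0 \<le> Winf W \<epsilon> \<and> Winf W \<epsilon> \<le> 2 * sqrt \<epsilon>"
  proof (rule eventually_mono[OF eventually_at_right_real[of 0 "1/2"]])
    fix \<epsilon> :: real assume "\<epsilon> \<in> {0<..<1/2}"
    then have \<epsilon>: "0 < \<epsilon>" "\<epsilon> \<le> 1/2" by auto
    interpret Gfun_primitive U \<epsilon> "W \<epsilon>" by (rule profile[OF \<epsilon>])
    show "0 \<le> Winf W \<epsilon> \<and> Winf W \<epsilon> \<le> 2 * sqrt \<epsilon>"
      unfolding Winf_eq[OF \<epsilon>] using w_nonneg[OF less_imp_le[OF radius_pos]] w_radius_le_sqrt ..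
  qed simp
  moreover have "((\<lambda>\<epsilon>. 2 * sqrt \<epsilon>) \<longlongrightarrow> 2 * sqrt 0) (at_right (0::real))"
    by (intro tendsto_intros)
  ultimately have "(Winf W \<longlongrightarrow> 0) (at_right 0)"
    unfolding eventually_conj_iff using tendsto_sandwich[of "\<lambda>_. 0" "Winf W" _ "\<lambda>\<epsilon>. 2 * sqrt \<epsilon>"]
    by simp
  then show ?thesis
    by (intro conjI exI[of _ 3] allI impI)
      (simp_all add: Winf_eq Gfun_primitive.mono_on_w[OF profile] Gfun_primitive.w_tendsto[OF profile]
        Gfun_primitive.w_nonneg[OF profile] Gfun_primitive.w_le_1[OF profile]
        Gfun_primitive.has_integral_exp_gap_sq[OF profile, THEN has_integral_integrable]
        Gfun_primitive.integral_exp_gap_sq_le[OF profile]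
        scaled_cutoff.Gfun_sq_integrable[OF scaled] scaled_cutoff.integral_Gfun_sq_le[OF scaled]
        scaled_cutoff.has_integral_Gfun_sq_tail[OF scaled, THEN has_integral_integrable]
        scaled_cutoff.integral_Gfun_sq_tail_integral_le[OF scaled] less_imp_le)
qed

end
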